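(* For every instance such that $|S_2|=1$ and $\pi_1+\pi_3+\pi_4-1=0$, we have $H^{PW''}\le \tfrac{20}{11}H^*$.
   Context: An instance consists of an integer $n\ge 1$ and growth rates $1=h(1)\ge h(2)\ge\cdots\ge h(n)>0$ of bamboos $b_1,\dots,b_n$. Bamboo Garden Trimming (discrete version): - All heights are $0$ initially. - On each day $t=1,2,\dots$ every bamboo $b_j$ grows by $h(j)$. - At the end of each day the gardener cuts exactly one bamboo $\sigma(t)\in\{1,\dots,n\}$ back to height $0$. The height of a schedule $\sigma:\mathbb{N}\to\{1,\dots,n\}$ is the supremum, over all days $t$ and all $j$, of the height of $b_j$ at the end of day $t$ just before the cut. $H^*$ denotes the infimum of this height over all schedules. Value of algorithm PW'': - Split $\{1,\dots,n\}$ into four sets: - $S_1=\{j: \tfrac23<h(j)\le 1\}$; - $S_2=\{j:\tfrac12<h(j)\le\tfrac23\}$; - $S_3=\{j: h(j)\le\tfrac12 \text{ and } \tfrac23 2^{-k}<h(j)\le 2^{-k}\text{ for some integer }k\ge1\}$; - $S_4=\{j: h(j)\le\tfrac12\text{ and } 2^{-(k+1)}<h(j)\le \tfrac23 2^{-k}\text{ for some integer }k\ge 1\}$. - Modified growths: $h''(j)=2^{-k}$ for $j\in S_3$ and $h''(j)=\tfrac23 2^{-k}$ for $j\in S_4$, with $k$ as in the definition of the set. - Let $\pi_1=|S_1|$, $sh_3=\sum_{j\in S_3}h''(j)$, $sh_4=\sum_{j\in S_4}h''(j)$, $\pi_3=\lfloor sh_3\rfloor$, $\pi_4=\lfloor sh_4\rfloor$,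 $f_3=sh_3-\pi_3$, $f_4=sh_4-\pi_4$. - Option (a): $\pi_R(a)=\lceil f_3+f_4\rceil$ and $z(a)=\pi_1+|S_2|+\pi_3+\pi_4+\pi_R(a)$. - Option (b): if $S_2=\emptyset$ put $z(b)=+\infty$. Otherwise let $h^*=\max_{j\in S_2}h(j)$ and $f_2=\tfrac12$ if $|S_2|$ is odd, $f_2=0$ if $|S_2|$ is even. Then $\pi_R(b)=\lceil f_2+f_3+f_4\rceil$ and $z(b)=2h^*\,(\pi_1+\lfloor |S_2|/2\rfloor+\pi_3+\pi_4+\pi_R(b))$. - The value returned by algorithm PW'' is $H^{PW''}=\min\{z(a),z(b)\}$. The paper takes this as the maximum height of the periodic pinwheel trimming schedule that it builds from these partitions. *)

theory Defs
  imports Complex_Main "HOL-Library.Extended_Real"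
begin

definition bgt_instance :: "nat \<Rightarrow> (nat \<Rightarrow> real) \<Rightarrow> bool" where
  "bgt_instance n h \<longleftrightarrow> n \<ge> 1 \<and> h 1 = 1 \<and>
     (\<forall>i j. 1 \<le> i \<longrightarrow> i \<le> j \<longrightarrow> j \<le> n \<longrightarrow> h j \<le> h i) \<and> h n > 0"

text \<open>A schedule is sigma : nat => nat, with days t = 1,2,...; sigma t in {1..n} for t >= 1.
  hgt h sigma j t is the height of bamboo j at the end of day t after the cut (t = 0: initial).\<close>

fun hgt :: "(nat \<Rightarrow> real) \<Rightarrow> (nat \<Rightarrow> nat) \<Rightarrow> nat \<Rightarrow> nat \<Rightarrow> real" where
  "hgt h \<sigma> j 0 = 0"
| "hgt h \<sigma> j (Suc t) = (if \<sigma> (Suc t) = j then 0 else hgt h \<sigma> j t + h j)"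

definition hgt_before_cut :: "(nat \<Rightarrow> real) \<Rightarrow> (nat \<Rightarrow> nat) \<Rightarrow> nat \<Rightarrow> nat \<Rightarrow> real" where
  "hgt_before_cut h \<sigma> j t = hgt h \<sigma> j (t - 1) + h j"

definition valid_schedule :: "nat \<Rightarrow> (nat \<Rightarrow> nat) \<Rightarrow> bool" where
  "valid_schedule n \<sigma> \<longleftrightarrow> (\<forall>t\<ge>1. \<sigma> t \<in> {1..n})"

definition schedule_height :: "nat \<Rightarrow> (nat \<Rightarrow> real) \<Rightarrow> (nat \<Rightarrow> nat) \<Rightarrow> ereal" where
  "schedule_height n h \<sigma> = (SUP t \<in> {1..}. SUP j \<in> {1..n}. ereal (hgt_before_cut h \<sigma> j t))"

definition H_opt :: "nat \<Rightarrow> (nat \<Rightarrow> real) \<Rightarrow> ereal" where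
  "H_opt n h = (INF \<sigma> \<in> {\<sigma>. valid_schedule n \<sigma>}. schedule_height n h \<sigma>)"

definition S1 :: "nat \<Rightarrow> (nat \<Rightarrow> real) \<Rightarrow> nat set" where
  "S1 n h = {j \<in> {1..n}. 2/3 < h j \<and> h j \<le> 1}"

definition S2 :: "nat \<Rightarrow> (nat \<Rightarrow> real) \<Rightarrow> nat set" where
  "S2 n h = {j \<in> {1..n}. 1/2 < h j \<and> h j \<le> 2/3}"

definition S3 :: "nat \<Rightarrow> (nat \<Rightarrow> real) \<Rightarrow> nat set" where
  "S3 n h = {j \<in> {1..n}. h j \<le> 1/2 \<and>
     (\<exists>k::nat. k \<ge> 1 \<and> 2/3 * (1/2)^k < h j \<and> h j \<le> (1/2)^k)}"

definition S4 :: "nat \<Rightarrow> (nat \<Rightarrow> real) \<Rightarrow> nat set" where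
  "S4 n h = {j \<in> {1..n}. h j \<le> 1/2 \<and>
     (\<exists>k::nat. k \<ge> 1 \<and> (1/2)^(k+1) < h j \<and> h j \<le> 2/3 * (1/2)^k)}"

definition h3 :: "real \<Rightarrow> real" where
  "h3 x = (1/2) ^ (THE k::nat. k \<ge> 1 \<and> 2/3 * (1/2)^k < x \<and> x \<le> (1/2)^k)"

definition h4 :: "real \<Rightarrow> real" where
  "h4 x = 2/3 * (1/2) ^ (THE k::nat. k \<ge> 1 \<and> (1/2)^(k+1) < x \<and> x \<le> 2/3 * (1/2)^k)"

definition sh3 :: "nat \<Rightarrow> (nat \<Rightarrow> real) \<Rightarrow> real" where
  "sh3 n h = (\<Sum>j\<in>S3 n h. h3 (h j))"

definition sh4 :: "nat \<Rightarrow> (nat \<Rightarrow> real) \<Rightarrow> real" where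
  "sh4 n h = (\<Sum>j\<in>S4 n h. h4 (h j))"

definition pi1 :: "nat \<Rightarrow> (nat \<Rightarrow> real) \<Rightarrow> int" where
  "pi1 n h = int (card (S1 n h))"

definition pi3 :: "nat \<Rightarrow> (nat \<Rightarrow> real) \<Rightarrow> int" where
  "pi3 n h = \<lfloor>sh3 n h\<rfloor>"

definition pi4 :: "nat \<Rightarrow> (nat \<Rightarrow> real) \<Rightarrow> int" where
  "pi4 n h = \<lfloor>sh4 n h\<rfloor>"

definition f3 :: "nat \<Rightarrow> (nat \<Rightarrow> real) \<Rightarrow> real" where
  "f3 n h = sh3 n h - of_int (pi3 n h)"

definition f4 :: "nat \<Rightarrow> (nat \<Rightarrow> real) \<Rightarrow> real" where
  "f4 n h = sh4 n h - of_int (pi4 n h)"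

definition z_a :: "nat \<Rightarrow> (nat \<Rightarrow> real) \<Rightarrow> real" where
  "z_a n h = of_int (pi1 n h + int (card (S2 n h)) + pi3 n h + pi4 n h
                     + \<lceil>f3 n h + f4 n h\<rceil>)"

definition f2 :: "nat \<Rightarrow> (nat \<Rightarrow> real) \<Rightarrow> real" where
  "f2 n h = (if odd (card (S2 n h)) then 1/2 else 0)"

definition z_b :: "nat \<Rightarrow> (nat \<Rightarrow> real) \<Rightarrow> ereal" where
  "z_b n h = (if S2 n h = {} then \<infinity> else
     ereal (2 * Max (h ` S2 n h) *
       of_int (pi1 n h + int (card (S2 n h) div 2) + pi3 n h + pi4 n h
               + \<lceil>f2 n h + f3 n h + f4 n h\<rceil>)))"

definition H_PW :: "nat \<Rightarrow> (nat \<Rightarrow> real) \<Rightarrow> ereal" where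
  "H_PW n h = min (ereal (z_a n h)) (z_b n h)"

end

theory Submission
  imports Defs
begin

text \<open>Any schedule of height H has total growth rate at most H: the sum of all heights
  grows by the total rate each day and drops by the cut height, which is at most H, while it
  stays bounded by n H. Hence H* is at least the total rate. Under the hypotheses PW''
  has one bamboo in each of S1 and S2 and the rounded rates of S3 and S4 sum to some
  X < 2; since rounding up raises a rate by a factor at most 3/2, the total rate is at
  least 1 + h(s) + 2X/3, and for each range of X one of the two options is within 20/11
  of this.\<close>

lemma sum_hgt_Suc:
  assumes "valid_schedule n \<sigma>"
  shows "(\<Sum>j\<in>{1..n}. hgt h \<sigma> j (Suc t)) =
         (\<Sum>j\<in>{1..n}. hgt h \<sigma> j t) + (\<Sum>j\<in>{1..n}. h j)
         - hgt_before_cut h \<sigma> (\<sigma> (Suc t)) (Suc t)"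
proof -
  let ?c = "\<sigma> (Suc t)"
  have c: "?c \<in> {1..n}" using assms by (auto simp: valid_schedule_def)
  have "(\<Sum>j\<in>{1..n}. hgt h \<sigma> j (Suc t)) =
        (\<Sum>j\<in>{1..n}. (hgt h \<sigma> j t + h j) - (if j = ?c then hgt h \<sigma> j t + h j else 0))"
    by (rule sum.cong) auto
  also have "\<dots> = (\<Sum>j\<in>{1..n}. hgt h \<sigma> j t + h j) - (hgt h \<sigma> ?c t + h ?c)"
    using c by (simp add: sum_subtractf sum.delta)
  finally show ?thesis by (simp add: hgt_before_cut_def sum.distrib)
qed

lemma sum_rates_le_height_bound:
  assumes \<sigma>: "valid_schedule n \<sigma>"
    and nonneg: "\<And>j. j \<in> {1..n} \<Longrightarrow> h j \<ge> 0"
    and bound: "\<And>t j. t \<ge> 1 \<Longrightarrow> j \<in> {1..n} \<Longrightarrow> hgt_before_cut h \<sigma> j t \<le> H"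
  shows "(\<Sum>j\<in>{1..n}. h j) \<le> H"
proof (rule ccontr)
  define S where "S = (\<Sum>j\<in>{1..n}. h j)"
  define \<Phi> where "\<Phi> t = (\<Sum>j\<in>{1..n}. hgt h \<sigma> j t)" for t
  assume "\<not> S \<le> H"
  then have "S > H" by simp
  have grows: "\<Phi> T \<ge> real T * (S - H)" for T
  proof (induction T)
    case (Suc T)
    have "\<sigma> (Suc T) \<in> {1..n}" using \<sigma> by (auto simp: valid_schedule_def)
    then have "hgt_before_cut h \<sigma> (\<sigma> (Suc T)) (Suc T) \<le> H" using bound by auto
    moreover have "\<Phi> (Suc T) = \<Phi> T + S - hgt_before_cut h \<sigma> (\<sigma> (Suc T)) (Suc T)"
      using sum_hgt_Suc[OF \<sigma>] by (simp add: \<Phi>_def S_def)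
    ultimately show ?case using Suc by (simp add: algebra_simps)
  qed (simp add: \<Phi>_def)
  have bounded: "\<Phi> T \<le> real n * H" for T
  proof -
    have "hgt h \<sigma> j T \<le> H" if "j \<in> {1..n}" for j
      using bound[of "Suc T" j] nonneg[OF that] that by (simp add: hgt_before_cut_def)
    then have "\<Phi> T \<le> (\<Sum>j\<in>{1..n}. H)" unfolding \<Phi>_def by (rule sum_mono)
    then show ?thesis by simp
  qed
  obtain T :: nat where "real n * H / (S - H) < real T" using reals_Archimedean2 by blast
  with \<open>S > H\<close> have "real n * H < real T * (S - H)" by (simp add: field_simps)
  with grows[of T] bounded[of T] show False by linarith
qed

lemma sum_rates_le_H_opt:
  assumes "n \<ge> 1" and nonneg: "\<And>j. j \<in> {1..n} \<Longrightarrow> h j \<ge> 0"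
  shows "ereal (\<Sum>j\<in>{1..n}. h j) \<le> H_opt n h"
  unfolding H_opt_def
proof (rule INF_greatest)
  fix \<sigma> assume "\<sigma> \<in> {\<sigma>. valid_schedule n \<sigma>}"
  then have \<sigma>: "valid_schedule n \<sigma>" by simp
  have le_height: "ereal (hgt_before_cut h \<sigma> j t) \<le> schedule_height n h \<sigma>"
    if "t \<ge> 1" "j \<in> {1..n}" for t j
    unfolding schedule_height_def using that
    by (meson SUP_upper2 atLeast_iff order_refl)
  show "ereal (\<Sum>j\<in>{1..n}. h j) \<le> schedule_height n h \<sigma>"
  proof (cases "schedule_height n h \<sigma>")
    case (real H)
    have "hgt_before_cut h \<sigma> j t \<le> H" if "t \<ge> 1" "j \<in> {1..n}" for t j
      using le_height[OF that] real by simp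
    with real show ?thesis using sum_rates_le_height_bound[OF \<sigma> nonneg] by simp
  next
    case MInf
    with le_height[of 1 1] assms(1) show ?thesis by simp
  qed simp
qed

lemma half_power_bracket_unique:
  assumes "(1/2)^(k+1) < x" "x \<le> (1/2::real)^k" "(1/2)^(m+1) < x" "x \<le> (1/2::real)^m"
  shows "m = k"
proof -
  have no_gap: "\<not> i < j" if "(1/2)^(i+1) < x" "x \<le> (1/2::real)^j" for i j :: nat
  proof
    assume "i < j"
    then have "(1/2::real)^j \<le> (1/2)^(i+1)" by (intro power_decreasing) auto
    with that show False by linarith
  qed
  show ?thesis using no_gap[of k m] no_gap[of m k] assms by linarith
qed

lemma half_power_Suc_less:
  assumes "2/3 * (1/2)^k < (x::real)"
  shows "(1/2)^(k+1) < x"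
proof -
  have "(1/2::real)^(k+1) = (1/2)^k / 2" by simp
  with assms zero_less_power[of "1/2::real" k] show ?thesis by linarith
qed

lemma le_half_power: "x \<le> 2/3 * (1/2)^k \<Longrightarrow> x \<le> (1/2::real)^k"
  using zero_less_power[of "1/2::real" k] by linarith

lemma h3_eq:
  assumes "k \<ge> 1" "2/3 * (1/2)^k < x" "x \<le> (1/2::real)^k"
  shows "h3 x = (1/2)^k"
proof -
  have "(THE k::nat. k \<ge> 1 \<and> 2/3 * (1/2)^k < x \<and> x \<le> (1/2)^k) = k"
  proof (rule the_equality)
    fix m :: nat assume m: "m \<ge> 1 \<and> 2/3 * (1/2)^m < x \<and> x \<le> (1/2)^m"
    show "m = k"
      by (rule half_power_bracket_unique[OF half_power_Suc_less[OF assms(2)] assms(3)])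
        (use m half_power_Suc_less in blast)+
  qed (use assms in blast)
  then show ?thesis by (simp add: h3_def)
qed

lemma h4_eq:
  assumes "k \<ge> 1" "(1/2)^(k+1) < x" "x \<le> 2/3 * (1/2::real)^k"
  shows "h4 x = 2/3 * (1/2)^k"
proof -
  have "(THE k::nat. k \<ge> 1 \<and> (1/2)^(k+1) < x \<and> x \<le> 2/3 * (1/2)^k) = k"
  proof (rule the_equality)
    fix m :: nat assume m: "m \<ge> 1 \<and> (1/2)^(m+1) < x \<and> x \<le> 2/3 * (1/2)^m"
    show "m = k"
      by (rule half_power_bracket_unique[OF assms(2) le_half_power[OF assms(3)]])
        (use m le_half_power in blast)+
  qed (use assms in blast)
  then show ?thesis by (simp add: h4_def)
qed

lemma S3_S4_disjoint: "S3 n h \<inter> S4 n h = {}"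
proof (rule equals0I)
  fix j assume "j \<in> S3 n h \<inter> S4 n h"
  then obtain k m where k: "2/3 * (1/2)^k < h j" "h j \<le> (1/2::real)^k"
    and m: "(1/2)^(m+1) < h j" "h j \<le> 2/3 * (1/2::real)^m"
    by (auto simp: S3_def S4_def)
  have "m = k"
    using half_power_bracket_unique[OF half_power_Suc_less[OF k(1)] k(2) m(1) le_half_power[OF m(2)]] .
  with k m show False by simp
qed

lemma sh3_nonneg: "sh3 n h \<ge> 0"
  unfolding sh3_def by (intro sum_nonneg) (simp add: h3_def)

lemma sh4_nonneg: "sh4 n h \<ge> 0"
  unfolding sh4_def by (intro sum_nonneg) (simp add: h4_def)

lemma sh3_le: "sh3 n h \<le> 3/2 * (\<Sum>j\<in>S3 n h. h j)"
  unfolding sh3_def sum_distrib_left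
proof (rule sum_mono)
  fix j assume "j \<in> S3 n h"
  then obtain k where "k \<ge> 1" "2/3 * (1/2)^k < h j" "h j \<le> (1/2::real)^k"
    by (auto simp: S3_def)
  then show "h3 (h j) \<le> 3/2 * h j" by (simp add: h3_eq)
qed

lemma sh4_le: "sh4 n h \<le> 3/2 * (\<Sum>j\<in>S4 n h. h j)"
  unfolding sh4_def sum_distrib_left
proof (rule sum_mono)
  fix j assume "j \<in> S4 n h"
  then obtain k where "k \<ge> 1" "(1/2)^(k+1) < h j" "h j \<le> 2/3 * (1/2::real)^k"
    by (auto simp: S4_def)
  then show "h4 (h j) \<le> 3/2 * h j" by (simp add: h4_eq)
qed

lemma bgt_instance_rate_pos:
  assumes "bgt_instance n h" "j \<in> {1..n}"
  shows "h j > 0"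
  using assms by (auto simp: bgt_instance_def) (metis order.trans order_less_le_trans order_refl)

lemma pi1_pos:
  assumes "bgt_instance n h"
  shows "pi1 n h \<ge> 1"
proof -
  have "1 \<in> S1 n h" using assms by (simp add: S1_def bgt_instance_def)
  moreover have "finite (S1 n h)" by (simp add: S1_def)
  ultimately have "card (S1 n h) > 0" using card_gt_0_iff by blast
  then show ?thesis by (simp add: pi1_def)
qed

lemma sum_rates_ge_first_S2_S3_S4:
  assumes "bgt_instance n h" "s \<in> S2 n h"
  shows "1 + h s + (\<Sum>j\<in>S3 n h. h j) + (\<Sum>j\<in>S4 n h. h j) \<le> (\<Sum>j\<in>{1..n}. h j)"
proof -
  have h1: "h 1 = 1" and "n \<ge> 1" using assms(1) by (auto simp: bgt_instance_def)
  define A where "A = insert 1 (insert s (S3 n h \<union> S4 n h))"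
  have "1 \<notin> S3 n h \<union> S4 n h" "s \<notin> S3 n h \<union> S4 n h" "s \<noteq> 1"
    using h1 assms(2) by (auto simp: S2_def S3_def S4_def)
  moreover have "finite (S3 n h)" "finite (S4 n h)" by (auto simp: S3_def S4_def)
  ultimately have "(\<Sum>j\<in>A. h j) = 1 + h s + (\<Sum>j\<in>S3 n h. h j) + (\<Sum>j\<in>S4 n h. h j)"
    unfolding A_def using h1 S3_S4_disjoint by (simp add: sum.union_disjoint)
  moreover have "A \<subseteq> {1..n}"
    using \<open>n \<ge> 1\<close> assms(2) by (auto simp: A_def S2_def S3_def S4_def)
  then have "(\<Sum>j\<in>A. h j) \<le> (\<Sum>j\<in>{1..n}. h j)"
    using bgt_instance_rate_pos[OF assms(1)] by (intro sum_mono2) (auto simp: less_imp_le)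
  ultimately show ?thesis by simp
qed

lemma one_option_within_20_11:
  fixes a X S :: real
  assumes "1/2 < a" "a \<le> 2/3" "0 \<le> X" "X < 2" "1 + a + 2/3 * X \<le> S"
  shows "2 + of_int \<lceil>X\<rceil> \<le> 20/11 * S \<or> 2 * a * (1 + of_int \<lceil>1/2 + X\<rceil>) \<le> 20/11 * S"
proof -
  consider "X = 0" | "0 < X" "X \<le> 1/2" | "1/2 < X" "X \<le> 1" | "1 < X" "X \<le> 3/2" | "3/2 < X"
    using assms(3) by linarith
  then show ?thesis
  proof cases
    case 2
    then have "\<lceil>1/2 + X\<rceil> \<le> 1" by (simp add: ceiling_le_iff)
    then have "2 * a * (1 + of_int \<lceil>1/2 + X\<rceil>) \<le> 2 * a * 2"
      using assms by (intro mult_left_mono) auto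
    with assms show ?thesis by linarith
  next
    case 3
    then have "\<lceil>X\<rceil> \<le> 1" by (simp add: ceiling_le_iff)
    with assms 3 show ?thesis by linarith
  next
    case 4
    then have "\<lceil>1/2 + X\<rceil> \<le> 2" by (simp add: ceiling_le_iff)
    then have "2 * a * (1 + of_int \<lceil>1/2 + X\<rceil>) \<le> 2 * a * 3"
      using assms by (intro mult_left_mono) auto
    with assms 4 show ?thesis by linarith
  next
    case 5
    have "\<lceil>X\<rceil> \<le> 2" using assms by (simp add: ceiling_le_iff)
    with assms 5 show ?thesis by linarith
  qed (use assms in simp)
qed

theorem proposition7:
  fixes n :: nat and h :: "nat \<Rightarrow> real"
  assumes "bgt_instance n h"
    and "card (S2 n h) = 1"
    and "pi1 n h + pi3 n h + pi4 n h - 1 = 0"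
  shows "H_PW n h \<le> ereal (20/11) * H_opt n h"
proof -
  define S where "S = (\<Sum>j\<in>{1..n}. h j)"
  define X where "X = sh3 n h + sh4 n h"
  obtain s where s: "S2 n h = {s}" using assms(2) card_1_singletonE by blast
  have "pi3 n h \<ge> 0" "pi4 n h \<ge> 0" using sh3_nonneg sh4_nonneg by (auto simp: pi3_def pi4_def)
  then have pi: "pi1 n h = 1" "pi3 n h = 0" "pi4 n h = 0" using pi1_pos[OF assms(1)] assms(3) by auto
  then have "0 \<le> X" "X < 2"
    using sh3_nonneg sh4_nonneg by (auto simp: X_def pi3_def pi4_def floor_eq_iff)
  have "f3 n h + f4 n h = X" using pi by (simp add: X_def f3_def f4_def)
  then have "z_a n h = 2 + of_int \<lceil>X\<rceil>"
    and "z_b n h = ereal (2 * h s * (1 + of_int \<lceil>1/2 + X\<rceil>))"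
    using pi assms(2) s by (simp_all add: z_a_def z_b_def f2_def add.assoc)
  moreover have "1/2 < h s" "h s \<le> 2/3" using s by (auto simp: S2_def)
  moreover have "1 + h s + 2/3 * X \<le> S"
    using sum_rates_ge_first_S2_S3_S4[OF assms(1), of s] s sh3_le[of n h] sh4_le[of n h]
    unfolding S_def X_def by (simp add: field_simps)
  ultimately have "H_PW n h \<le> ereal (20/11 * S)"
    using one_option_within_20_11[of "h s" X S] \<open>0 \<le> X\<close> \<open>X < 2\<close>
    by (auto simp: H_PW_def min_le_iff_disj)
  also have "\<dots> = ereal (20/11) * ereal S" by simp
  also have "\<dots> \<le> ereal (20/11) * H_opt n h"
    using sum_rates_le_H_opt[of n h] bgt_instance_rate_pos[OF assms(1)] assms(1)
    by (intro ereal_mult_left_mono) (auto simp: S_def bgt_instance_def less_imp_le)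
  finally show ?thesis .
qed

end
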